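(* Let $\phi$ be measurable, let $\mathcal{F}_{k-1}$ be the $\sigma$-algebra generated by $\{(\hat{\mathbf{x}}^i_{k-1},\mathbf{y}^i_{k-1})\}_{i=1}^N$, and assume: (a) $\rho(\cdot|\mathbf{x}_k)$ is bounded; (b) $\mathbb{E}\langle\pi^N_{k-1|k-1},\delta_T\rho|\phi|^4\rangle\le M\|\rho(\cdot|\mathbf{x}_k)\|_\infty\|\phi\|^4_{k-1,4}$ and $\langle\pi_{k-1|k-1},\delta_T\rho|\phi|^4\rangle\le\|\rho(\cdot|\mathbf{x}_k)\|_\infty\|\phi\|^4_{k-1,4}$, with $M$ independent of $N$; (c) almost surely, the conditional probability given $\mathcal{F}_{k-1}$ that a single draw of step (1) at time $k$ fails the acceptance test is at most $\epsilon_k<1$. Then $$\mathbb{E}\Big|\langle\widetilde\pi^N_{k|k-1},|\phi|^4\rangle-\tfrac1N\textstyle\sum_{i}\mathbb{E}[|\phi(\tilde{\hat{\mathbf{x}}}^i_k,\tilde{\mathbf{y}}^i_k)|^4|\mathcal{F}_{k-1}]\Big|\le\frac{2}{1-\epsilon_k}M\|\rho(\cdot|\mathbf{x}_k)\|_\infty\|\phi\|^4_{k-1,4},$$ $$\mathbb{E}\Big|\tfrac1N\textstyle\sum_{i}\mathbb{E}[|\phi(\tilde{\hat{\mathbf{x}}}^i_k,\tilde{\mathbf{y}}^i_k)|^4|\mathcal{F}_{k-1}]-\langle\pi^N_{k-1|k-1},\delta_T\rho|\phi|^4\rangle\Big|\le\frac{2-\epsilon_k}{1-\epsilon_k}M\|\rho(\cdot|\mathbf{x}_k)\|_\infty\|\phi\|^4_{k-1,4},$$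 $$\mathbb{E}\big|\langle\pi^N_{k-1|k-1},\delta_T\rho|\phi|^4\rangle-\langle\pi_{k|k-1},|\phi|^4\rangle\big|\le\|\rho(\cdot|\mathbf{x}_k)\|_\infty(M+1)\|\phi\|^4_{k-1,4}.$$
   Context: Notation: for a measure $\nu$ and function $\phi$, $\langle\nu,\phi\rangle=\int\phi\,d\nu$; $\|f\|_\infty$ is the supremum norm. Fixed data: integer $k\ge1$; deterministic vectors $\mathbf{x}_0,\dots,\mathbf{x}_k\in\mathbb{R}^{n_x}$ (defender's true states) and $\mathbf{a}_1,\dots,\mathbf{a}_k\in\mathbb{R}^{n_a}$ (defender's observations); a conditional density $\rho(\mathbf{y}|\mathbf{x})$ in $\mathbf{y}\in\mathbb{R}^{n_y}$; a conditional density $\beta(\mathbf{a}|\hat{\mathbf{x}})$ in $\mathbf{a}\in\mathbb{R}^{n_a}$, $\hat{\mathbf{x}}\in\mathbb{R}^{n_x}$; measurable maps $T_s:\mathbb{R}^{n_x}\times\mathbb{R}^{n_y}\to\mathbb{R}^{n_x}$, $s=1,\dots,k$ (the attacker's forward-filter update $\hat{\mathbf{x}}_s=T_s(\hat{\mathbf{x}}_{s-1},\mathbf{y}_s)$). Write $\beta_s(\hat{\mathbf{x}},\mathbf{y})=\beta(\mathbf{a}_s|\hat{\mathbf{x}})$ and, for a function $\psi$ of $(\hat{\mathbf{x}},\mathbf{y})$, $(\delta_T\rho\psi)_s(\hat{\mathbf{x}}',\mathbf{y}')=\int\psi(T_s(\hat{\mathbf{x}}',\mathbf{y}),\mathbf{y})\rho(\mathbf{y}|\mathbf{x}_s)\,d\mathbf{y}$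 (abbreviated $\delta_T\rho\psi$). Optimal inverse filter: probability measures on $\mathbb{R}^{n_x}\times\mathbb{R}^{n_y}$ defined from $\pi_{0|0}=\pi_0$ by $\langle\pi_{s|s-1},\psi\rangle=\langle\pi_{s-1|s-1},\delta_T\rho\psi\rangle$ and $\langle\pi_{s|s},\psi\rangle=\langle\pi_{s|s-1},\beta_s\psi\rangle/\langle\pi_{s|s-1},\beta_s\rangle$. I-PF with $N$ particles and thresholds $\gamma_s>0$: draw $\hat{\mathbf{x}}^i_0$ i.i.d. from a given distribution $\widetilde\pi^x_0$ and, independently, $\mathbf{y}^i_0$ i.i.d. from $\rho(\cdot|\mathbf{x}_0)$, $i=1,\dots,N$; $\pi_0$ is the (product) law of $(\hat{\mathbf{x}}^i_0,\mathbf{y}^i_0)$ and $\pi^N_{0|0}=\frac1N\sum_i\delta_{(\hat{\mathbf{x}}^i_0,\mathbf{y}^i_0)}$. For $s\ge1$, given particles $(\hat{\mathbf{x}}^i_{s-1},\mathbf{y}^i_{s-1})$: (1) draw conditionally i.i.d. $\bar{\mathbf{y}}^i_s\sim\rho(\cdot|\mathbf{x}_s)$ and set $\bar{\hat{\mathbf{x}}}^i_s=T_s(\hat{\mathbf{x}}^i_{s-1},\bar{\mathbf{y}}^i_s)$; (2) if $\frac1N\sum_i\beta(\mathbf{a}_s|\bar{\hat{\mathbf{x}}}^i_s)\ge\gamma_s$, accept and set $(\tilde{\hat{\mathbf{x}}}^i_s,\tilde{\mathbf{y}}^i_s)=(\bar{\hat{\mathbf{x}}}^i_s,\bar{\mathbf{y}}^i_s)$;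 otherwise redo (1) independently; (3) set $\widetilde\pi^N_{s|s-1}=\frac1N\sum_i\delta_{(\tilde{\hat{\mathbf{x}}}^i_s,\tilde{\mathbf{y}}^i_s)}$, weights $\omega^i_s=\beta(\mathbf{a}_s|\tilde{\hat{\mathbf{x}}}^i_s)/\sum_j\beta(\mathbf{a}_s|\tilde{\hat{\mathbf{x}}}^j_s)$, $\widetilde\pi^N_{s|s}=\sum_i\omega^i_s\delta_{(\tilde{\hat{\mathbf{x}}}^i_s,\tilde{\mathbf{y}}^i_s)}$; (4) draw $N$ conditionally i.i.d. $(\hat{\mathbf{x}}^i_s,\mathbf{y}^i_s)\sim\widetilde\pi^N_{s|s}$ and set $\pi^N_{s|s}=\frac1N\sum_i\delta_{(\hat{\mathbf{x}}^i_s,\mathbf{y}^i_s)}$. Expectations $\mathbb{E}$ are over the particle randomness. Norm: $\|\phi\|_{s,4}=\max\{1,\max_{0\le r\le s}\langle\pi_{r|r},|\phi|^4\rangle^{1/4}\}$. *)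

theory Defs
  imports "HOL-Probability.Probability"
begin

(* A particle cloud: particle i (i < N) is the pair (xhat^i, y^i).
   Clouds live in the product space PiM {..<N} (borel). *)
type_synonym ('x, 'y) cloud = "nat \<Rightarrow> 'x \<times> 'y"

definition cloud_space :: "nat \<Rightarrow> ('x::euclidean_space, 'y::euclidean_space) cloud measure" where
  "cloud_space N = PiM {..<N} (\<lambda>_. borel)"

definition supnorm :: "('y \<Rightarrow> real) \<Rightarrow> real" where
  "supnorm f = (\<Squnion>y. \<bar>f y\<bar>)"

definition ipf_prop1 ::
  "('x::euclidean_space \<Rightarrow> 'y::euclidean_space \<Rightarrow> 'x) \<Rightarrow> ('y \<Rightarrow> real) \<Rightarrow> 'x \<Rightarrow> ('x \<times> 'y) measure" where
  "ipf_prop1 Ts r xh = distr (density lborel (\<lambda>y. ennreal (r y))) borel (\<lambda>y. (Ts xh y, y))"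

definition delta_T_rho ::
  "(nat \<Rightarrow> 'x::euclidean_space \<Rightarrow> 'y::euclidean_space \<Rightarrow> 'x) \<Rightarrow> ('x \<Rightarrow> 'y \<Rightarrow> real) \<Rightarrow> (nat \<Rightarrow> 'x)
    \<Rightarrow> nat \<Rightarrow> ('x \<times> 'y \<Rightarrow> real) \<Rightarrow> 'x \<times> 'y \<Rightarrow> ennreal" where
  "delta_T_rho T \<rho> xs s \<psi> z = (\<integral>\<^sup>+ y. ennreal (\<psi> (T s (fst z) y, y) * \<rho> (xs s) y) \<partial>lborel)"

(* prediction: <pi_{s|s-1}, psi> = <pi_{s-1|s-1}, delta_T rho psi> *)
definition opt_pred ::
  "(nat \<Rightarrow> 'x::euclidean_space \<Rightarrow> 'y::euclidean_space \<Rightarrow> 'x) \<Rightarrow> ('x \<Rightarrow> 'y \<Rightarrow> real) \<Rightarrow> (nat \<Rightarrow> 'x)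
    \<Rightarrow> nat \<Rightarrow> ('x \<times> 'y) measure \<Rightarrow> ('x \<times> 'y) measure" where
  "opt_pred T \<rho> xs s \<mu> = bind \<mu> (\<lambda>z. ipf_prop1 (T s) (\<rho> (xs s)) (fst z))"

definition opt_upd ::
  "('x \<Rightarrow> 'o \<Rightarrow> real) \<Rightarrow> 'o \<Rightarrow> ('x \<times> 'y) measure \<Rightarrow> ('x \<times> 'y) measure" where
  "opt_upd \<beta> a P = density P (\<lambda>z. ennreal (\<beta> (fst z) a) / (\<integral>\<^sup>+ w. ennreal (\<beta> (fst w) a) \<partial>P))"

definition ipf_pi0 ::
  "'x::euclidean_space measure \<Rightarrow> ('x \<Rightarrow> 'y::euclidean_space \<Rightarrow> real) \<Rightarrow> (nat \<Rightarrow> 'x) \<Rightarrow> ('x \<times> 'y) measure" where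
  "ipf_pi0 pi0x \<rho> xs = pi0x \<Otimes>\<^sub>M density lborel (\<lambda>y. ennreal (\<rho> (xs 0) y))"

(* opt_filter ... s = pi_{s|s} *)
fun opt_filter ::
  "'x::euclidean_space measure \<Rightarrow> (nat \<Rightarrow> 'x \<Rightarrow> 'y::euclidean_space \<Rightarrow> 'x) \<Rightarrow> ('x \<Rightarrow> 'y \<Rightarrow> real)
    \<Rightarrow> ('x \<Rightarrow> 'o \<Rightarrow> real) \<Rightarrow> (nat \<Rightarrow> 'x) \<Rightarrow> (nat \<Rightarrow> 'o) \<Rightarrow> nat \<Rightarrow> ('x \<times> 'y) measure" where
  "opt_filter pi0x T \<rho> \<beta> xs as 0 = ipf_pi0 pi0x \<rho> xs"
| "opt_filter pi0x T \<rho> \<beta> xs as (Suc s) =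
     opt_upd \<beta> (as (Suc s)) (opt_pred T \<rho> xs (Suc s) (opt_filter pi0x T \<rho> \<beta> xs as s))"

definition norm4_pow4 ::
  "'x::euclidean_space measure \<Rightarrow> (nat \<Rightarrow> 'x \<Rightarrow> 'y::euclidean_space \<Rightarrow> 'x) \<Rightarrow> ('x \<Rightarrow> 'y \<Rightarrow> real)
    \<Rightarrow> ('x \<Rightarrow> 'o \<Rightarrow> real) \<Rightarrow> (nat \<Rightarrow> 'x) \<Rightarrow> (nat \<Rightarrow> 'o) \<Rightarrow> ('x \<times> 'y \<Rightarrow> real) \<Rightarrow> nat \<Rightarrow> ennreal" where
  "norm4_pow4 pi0x T \<rho> \<beta> xs as \<phi> s =
     max 1 (Max ((\<lambda>r. \<integral>\<^sup>+ z. ennreal (\<bar>\<phi> z\<bar> ^ 4) \<partial>opt_filter pi0x T \<rho> \<beta> xs as r) ` {..s}))"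

(* step (1): one batch of N proposals given the cloud c at time s-1 *)
definition ipf_proposal ::
  "nat \<Rightarrow> (nat \<Rightarrow> 'x::euclidean_space \<Rightarrow> 'y::euclidean_space \<Rightarrow> 'x) \<Rightarrow> ('x \<Rightarrow> 'y \<Rightarrow> real) \<Rightarrow> (nat \<Rightarrow> 'x)
    \<Rightarrow> nat \<Rightarrow> ('x, 'y) cloud \<Rightarrow> ('x, 'y) cloud measure" where
  "ipf_proposal N T \<rho> xs s c = PiM {..<N} (\<lambda>i. ipf_prop1 (T s) (\<rho> (xs s)) (fst (c i)))"

(* step (2): acceptance test *)
definition ipf_accept_set ::
  "nat \<Rightarrow> ('x::euclidean_space \<Rightarrow> 'o \<Rightarrow> real) \<Rightarrow> 'o \<Rightarrow> real \<Rightarrow> ('x, 'y::euclidean_space) cloud set" where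
  "ipf_accept_set N \<beta> a g = {c \<in> space (cloud_space N). g \<le> (\<Sum>i<N. \<beta> (fst (c i)) a) / real N}"

(* law of the accepted batch of the rejection loop: proposal conditioned on acceptance
   (the null measure if acceptance has probability 0, i.e. the loop never terminates) *)
definition ipf_accepted ::
  "nat \<Rightarrow> (nat \<Rightarrow> 'x::euclidean_space \<Rightarrow> 'y::euclidean_space \<Rightarrow> 'x) \<Rightarrow> ('x \<Rightarrow> 'y \<Rightarrow> real)
    \<Rightarrow> ('x \<Rightarrow> 'o \<Rightarrow> real) \<Rightarrow> (nat \<Rightarrow> 'x) \<Rightarrow> (nat \<Rightarrow> 'o) \<Rightarrow> (nat \<Rightarrow> real)
    \<Rightarrow> nat \<Rightarrow> ('x, 'y) cloud \<Rightarrow> ('x, 'y) cloud measure" where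
  "ipf_accepted N T \<rho> \<beta> xs as \<gamma> s c =
     uniform_measure (ipf_proposal N T \<rho> xs s c) (ipf_accept_set N \<beta> (as s) (\<gamma> s))"

definition ipf_weight_pmf ::
  "nat \<Rightarrow> ('x \<Rightarrow> 'o \<Rightarrow> real) \<Rightarrow> 'o \<Rightarrow> ('x, 'y) cloud \<Rightarrow> nat pmf" where
  "ipf_weight_pmf N \<beta> a c =
     embed_pmf (\<lambda>i. if i < N then \<beta> (fst (c i)) a / (\<Sum>j<N. \<beta> (fst (c j)) a) else 0)"

(* step (4): N i.i.d. draws from the weighted empirical measure *)
definition ipf_resample ::
  "nat \<Rightarrow> ('x::euclidean_space \<Rightarrow> 'o \<Rightarrow> real) \<Rightarrow> 'o \<Rightarrow> ('x, 'y::euclidean_space) cloud \<Rightarrow> ('x, 'y) cloud measure" where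
  "ipf_resample N \<beta> a c = PiM {..<N} (\<lambda>_. distr (measure_pmf (ipf_weight_pmf N \<beta> a c)) borel c)"

(* ipf_law ... s = law of the resampled cloud {(xhat^i_s, y^i_s)}_i, i.e. of pi^N_{s|s} *)
fun ipf_law ::
  "'x::euclidean_space measure \<Rightarrow> nat \<Rightarrow> (nat \<Rightarrow> 'x \<Rightarrow> 'y::euclidean_space \<Rightarrow> 'x) \<Rightarrow> ('x \<Rightarrow> 'y \<Rightarrow> real)
    \<Rightarrow> ('x \<Rightarrow> 'o \<Rightarrow> real) \<Rightarrow> (nat \<Rightarrow> 'x) \<Rightarrow> (nat \<Rightarrow> 'o) \<Rightarrow> (nat \<Rightarrow> real)
    \<Rightarrow> nat \<Rightarrow> ('x, 'y) cloud measure" where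
  "ipf_law pi0x N T \<rho> \<beta> xs as \<gamma> 0 = PiM {..<N} (\<lambda>_. ipf_pi0 pi0x \<rho> xs)"
| "ipf_law pi0x N T \<rho> \<beta> xs as \<gamma> (Suc s) =
     bind (ipf_law pi0x N T \<rho> \<beta> xs as \<gamma> s)
       (\<lambda>c. bind (ipf_accepted N T \<rho> \<beta> xs as \<gamma> (Suc s) c)
               (\<lambda>c'. ipf_resample N \<beta> (as (Suc s)) c'))"

(* joint law of (cloud at time k-1, accepted cloud {(tilde xhat^i_k, tilde y^i_k)}_i at time k) *)
definition ipf_joint ::
  "'x::euclidean_space measure \<Rightarrow> nat \<Rightarrow> (nat \<Rightarrow> 'x \<Rightarrow> 'y::euclidean_space \<Rightarrow> 'x) \<Rightarrow> ('x \<Rightarrow> 'y \<Rightarrow> real)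
    \<Rightarrow> ('x \<Rightarrow> 'o \<Rightarrow> real) \<Rightarrow> (nat \<Rightarrow> 'x) \<Rightarrow> (nat \<Rightarrow> 'o) \<Rightarrow> (nat \<Rightarrow> real)
    \<Rightarrow> nat \<Rightarrow> (('x, 'y) cloud \<times> ('x, 'y) cloud) measure" where
  "ipf_joint pi0x N T \<rho> \<beta> xs as \<gamma> k =
     bind (ipf_law pi0x N T \<rho> \<beta> xs as \<gamma> (k - 1))
       (\<lambda>c. distr (ipf_accepted N T \<rho> \<beta> xs as \<gamma> k c)
               (cloud_space N \<Otimes>\<^sub>M cloud_space N) (\<lambda>c'. (c, c')))"

(* F_{k-1}: sigma-algebra generated by the time-(k-1) particles (first component) *)
definition ipf_F :: "nat \<Rightarrow> (('x::euclidean_space, 'y::euclidean_space) cloud \<times> ('x, 'y) cloud) measure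
    \<Rightarrow> (('x, 'y) cloud \<times> ('x, 'y) cloud) measure" where
  "ipf_F N J = vimage_algebra (space J) fst (cloud_space N)"

end

theory Submission
  imports Defs
begin

text \<open>Given the old cloud, the accepted batch is the proposal batch conditioned on the acceptance
  event, which has probability at least \<open>1 - \<epsilon>\<close>. Hence the conditional mean of a nonnegative
  functional of the accepted batch is at most \<open>1 / (1 - \<epsilon>)\<close> times its mean under the proposal, and
  under the proposal the mean of \<open>|\<phi>|\<^sup>4\<close> at the \<open>i\<close>-th new particle is \<open>\<delta>\<^sub>T\<rho>|\<phi>|\<^sup>4\<close> at the \<open>i\<close>-th
  old particle. Each estimate is then a triangle inequality whose two terms are controlled by
  hypothesis (b), using the \<open>L\<^sup>1\<close>-contraction of conditional expectation for the conditional means.\<close>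

section \<open>Measurability, conditioning and averages\<close>

lemma measurable_case_prod_fixed_fst:
  fixes f :: "'a::second_countable_topology \<Rightarrow> 'b::second_countable_topology \<Rightarrow> 'c::topological_space"
  assumes "case_prod f \<in> borel_measurable borel"
  shows "f x \<in> borel_measurable borel"
proof -
  have "(\<lambda>y. (x, y)) \<in> measurable borel (borel :: ('a \<times> 'b) measure)"
    unfolding borel_prod[symmetric] by measurable
  from measurable_compose[OF this assms] show ?thesis by simp
qed

lemma measurable_case_prod_fixed_snd:
  fixes f :: "'a::second_countable_topology \<Rightarrow> 'b::second_countable_topology \<Rightarrow> 'c::topological_space"
  assumes "case_prod f \<in> borel_measurable borel"
  shows "(\<lambda>x. f x y) \<in> borel_measurable borel"
proof -
  have "(\<lambda>x. (x, y)) \<in> measurable borel (borel :: ('a \<times> 'b) measure)"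
    unfolding borel_prod[symmetric] by measurable
  from measurable_compose[OF this assms] show ?thesis by simp
qed

lemma measurable_fst_borel:
  "fst \<in> measurable (borel :: ('a::second_countable_topology \<times> 'b::second_countable_topology) measure) borel"
  by (metis borel_prod measurable_fst)

lemma subprob_space_uniform_measure:
  assumes "subprob_space M" "A \<in> sets M"
  shows "subprob_space (uniform_measure M A)"
proof
  interpret subprob_space M by fact
  show "space (uniform_measure M A) \<noteq> {}" by (simp add: subprob_not_empty)
  have "emeasure M A / emeasure M A \<le> 1"
    by (cases "emeasure M A = 0") (auto simp: less_top[symmetric])
  then show "emeasure (uniform_measure M A) (space (uniform_measure M A)) \<le> 1"
    using assms(2) sets.sets_into_space[OF assms(2)] by (simp add: Int_absorb2)
qed

lemma measurable_uniform_measure_kernel: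
  assumes K: "K \<in> measurable M (subprob_algebra N)" and A: "A \<in> sets N"
  shows "(\<lambda>x. uniform_measure (K x) A) \<in> measurable M (subprob_algebra N)"
proof (rule measurable_subprob_algebra)
  fix x assume x: "x \<in> space M"
  have "subprob_space (K x)" "sets (K x) = sets N"
    using measurable_space[OF K x] by (auto simp: space_subprob_algebra)
  then show "subprob_space (uniform_measure (K x) A)" "sets (uniform_measure (K x) A) = sets N"
    using A by (auto intro: subprob_space_uniform_measure)
next
  fix B assume B: "B \<in> sets N"
  have "(\<lambda>x. emeasure (K x) (A \<inter> B) / emeasure (K x) A) \<in> borel_measurable M"
    using A B by (intro borel_measurable_divide_ennreal measurable_emeasure_kernel[OF K]) auto
  moreover have "emeasure (uniform_measure (K x) A) B = emeasure (K x) (A \<inter> B) / emeasure (K x) A"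
    if "x \<in> space M" for x
    using measurable_space[OF K that] A B by (simp add: space_subprob_algebra)
  ultimately show "(\<lambda>x. emeasure (uniform_measure (K x) A) B) \<in> borel_measurable M"
    by (simp cong: measurable_cong)
qed

lemma nn_integral_uniform_measure_le:
  assumes P: "prob_space P" and f: "f \<in> borel_measurable P" and A: "A \<in> sets P"
    and fail: "measure P (space P - A) \<le> \<epsilon>" and eps: "\<epsilon> < 1"
  shows "(\<integral>\<^sup>+ x. f x \<partial>uniform_measure P A) \<le> ennreal (1 / (1 - \<epsilon>)) * (\<integral>\<^sup>+ x. f x \<partial>P)"
proof -
  interpret prob_space P by fact
  have "1 - \<epsilon> \<le> prob A" using fail prob_compl[OF A] by simp
  then have low: "ennreal (1 - \<epsilon>) \<le> emeasure P A" by (simp add: emeasure_eq_measure ennreal_leI)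
  have inv: "1 \<le> emeasure P A * ennreal (1 / (1 - \<epsilon>))"
  proof -
    have "1 = ennreal (1 - \<epsilon>) * ennreal (1 / (1 - \<epsilon>))"
      using eps by (simp add: ennreal_mult[symmetric])
    also have "\<dots> \<le> emeasure P A * ennreal (1 / (1 - \<epsilon>))" by (intro mult_right_mono low) simp
    finally show ?thesis .
  qed
  have "(\<integral>\<^sup>+ x. f x \<partial>uniform_measure P A) = (\<integral>\<^sup>+ x. f x * indicator A x \<partial>P) / emeasure P A"
    by (rule nn_integral_uniform_measure[OF f A])
  also have "\<dots> \<le> (\<integral>\<^sup>+ x. f x \<partial>P) / emeasure P A"
    by (intro divide_right_mono_ennreal nn_integral_mono) (auto simp: indicator_def)
  also have "\<dots> \<le> ennreal (1 / (1 - \<epsilon>)) * (\<integral>\<^sup>+ x. f x \<partial>P)"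
  proof (rule divide_le_posI_ennreal)
    show "0 < emeasure P A" using eps by (intro less_le_trans[OF _ low]) simp
    show "(\<integral>\<^sup>+ x. f x \<partial>P) \<le> emeasure P A * (ennreal (1 / (1 - \<epsilon>)) * (\<integral>\<^sup>+ x. f x \<partial>P))"
      using mult_right_mono[OF inv, of "\<integral>\<^sup>+ x. f x \<partial>P"] by (simp add: mult.assoc)
  qed
  finally show ?thesis .
qed

lemma nn_integral_abs_real_cond_exp_le:
  assumes "sigma_finite_subalgebra M F" and f: "f \<in> borel_measurable M"
  shows "(\<integral>\<^sup>+ x. ennreal \<bar>real_cond_exp M F f x\<bar> \<partial>M) \<le> (\<integral>\<^sup>+ x. ennreal \<bar>f x\<bar> \<partial>M)"
proof -
  interpret sigma_finite_subalgebra M F by fact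
  have fa: "(\<lambda>x. ennreal \<bar>f x\<bar>) \<in> borel_measurable M" using f by measurable
  have "(\<integral>\<^sup>+ x. ennreal \<bar>real_cond_exp M F f x\<bar> \<partial>M) \<le> (\<integral>\<^sup>+ x. nn_cond_exp M F (\<lambda>x. ennreal \<bar>f x\<bar>) x \<partial>M)"
    by (rule nn_integral_mono_AE) (use real_cond_exp_abs[OF f] in auto)
  also have "\<dots> = (\<integral>\<^sup>+ x. 1 * nn_cond_exp M F (\<lambda>x. ennreal \<bar>f x\<bar>) x \<partial>M)" by simp
  also have "\<dots> = (\<integral>\<^sup>+ x. 1 * ennreal \<bar>f x\<bar> \<partial>M)"
    by (rule nn_cond_exp_intg) (use fa in simp_all)
  finally show ?thesis by simp
qed

lemma ennreal_enn2real_le: "ennreal (enn2real x) \<le> x"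
  by (simp add: ennreal_enn2real_if)

lemma ennreal_abs_diff_le: "ennreal \<bar>a - b\<bar> \<le> ennreal \<bar>a\<bar> + ennreal \<bar>b::real\<bar>"
proof -
  have "ennreal \<bar>a - b\<bar> \<le> ennreal (\<bar>a\<bar> + \<bar>b\<bar>)" by (rule ennreal_leI) simp
  then show ?thesis by (simp add: ennreal_plus)
qed

lemma ennreal_abs_average_le:
  "ennreal \<bar>(\<Sum>i<N. y i) / real N\<bar> \<le> (\<Sum>i<N. ennreal \<bar>y i\<bar>) / of_nat N"
proof (cases "N = 0")
  case False
  have "\<bar>(\<Sum>i<N. y i) / real N\<bar> \<le> (\<Sum>i<N. \<bar>y i\<bar>) / real N"
    by (simp add: divide_right_mono sum_abs)
  then have "ennreal \<bar>(\<Sum>i<N. y i) / real N\<bar> \<le> ennreal ((\<Sum>i<N. \<bar>y i\<bar>) / real N)"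
    by (rule ennreal_leI)
  also have "\<dots> = ennreal (\<Sum>i<N. \<bar>y i\<bar>) / ennreal (real N)"
    using False by (simp add: divide_ennreal sum_nonneg)
  also have "\<dots> = (\<Sum>i<N. ennreal \<bar>y i\<bar>) / of_nat N"
    by (simp add: ennreal_of_nat_eq_real_of_nat)
  finally show ?thesis .
qed simp

lemma ennreal_two_mult_inverse_one_minus:
  "\<epsilon> < 1 \<Longrightarrow> 2 * ennreal (1 / (1 - \<epsilon>)) = ennreal (2 / (1 - \<epsilon>))"
  using ennreal_mult[of 2 "1 / (1 - \<epsilon>)"] by simp

lemma ennreal_inverse_one_minus_plus_one:
  assumes "\<epsilon> < 1"
  shows "ennreal (1 / (1 - \<epsilon>)) + 1 = ennreal ((2 - \<epsilon>) / (1 - \<epsilon>))"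
proof -
  have "(2 - \<epsilon>) / (1 - \<epsilon>) = 1 / (1 - \<epsilon>) + 1" using assms by (simp add: field_simps)
  then show ?thesis using assms by (simp add: ennreal_plus)
qed

lemma nn_integral_abs_diff_le:
  assumes "f \<in> borel_measurable M" "g \<in> borel_measurable M"
  shows "(\<integral>\<^sup>+ x. ennreal \<bar>f x - g x\<bar> \<partial>M) \<le> (\<integral>\<^sup>+ x. ennreal \<bar>f x\<bar> \<partial>M) + (\<integral>\<^sup>+ x. ennreal \<bar>g x\<bar> \<partial>M)"
proof -
  have "(\<integral>\<^sup>+ x. ennreal \<bar>f x - g x\<bar> \<partial>M) \<le> (\<integral>\<^sup>+ x. ennreal \<bar>f x\<bar> + ennreal \<bar>g x\<bar> \<partial>M)"
    by (intro nn_integral_mono ennreal_abs_diff_le)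
  also have "\<dots> = (\<integral>\<^sup>+ x. ennreal \<bar>f x\<bar> \<partial>M) + (\<integral>\<^sup>+ x. ennreal \<bar>g x\<bar> \<partial>M)"
    using assms by (intro nn_integral_add) auto
  finally show ?thesis .
qed

lemma nn_integral_average_abs_cond_exp_le:
  assumes sf: "sigma_finite_subalgebra M F" and g: "\<And>i. i < N \<Longrightarrow> g i \<in> borel_measurable M"
  shows "(\<integral>\<^sup>+ x. (\<Sum>i<N. ennreal \<bar>real_cond_exp M F (g i) x\<bar>) / of_nat N \<partial>M)
    \<le> (\<integral>\<^sup>+ x. (\<Sum>i<N. ennreal \<bar>g i x\<bar>) / of_nat N \<partial>M)"
proof -
  interpret sigma_finite_subalgebra M F by fact
  have "(\<integral>\<^sup>+ x. (\<Sum>i<N. ennreal \<bar>real_cond_exp M F (g i) x\<bar>) / of_nat N \<partial>M)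
      = (\<Sum>i<N. \<integral>\<^sup>+ x. ennreal \<bar>real_cond_exp M F (g i) x\<bar> \<partial>M) / of_nat N"
    by (simp only: nn_integral_divide nn_integral_sum borel_measurable_sum borel_measurable_cond_exp2
        measurable_compose[OF _ measurable_ennreal] borel_measurable_abs)
  also have "\<dots> \<le> (\<Sum>i<N. \<integral>\<^sup>+ x. ennreal \<bar>g i x\<bar> \<partial>M) / of_nat N"
    using g by (intro divide_right_mono_ennreal sum_mono nn_integral_abs_real_cond_exp_le[OF sf]) auto
  also have "\<dots> = (\<integral>\<^sup>+ x. (\<Sum>i<N. ennreal \<bar>g i x\<bar>) / of_nat N \<partial>M)"
  proof -
    have m: "\<And>i. i \<in> {..<N} \<Longrightarrow> (\<lambda>x. ennreal \<bar>g i x\<bar>) \<in> borel_measurable M" using g by auto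
    show ?thesis
      by (simp only: nn_integral_divide[OF borel_measurable_sum[OF m]] nn_integral_sum[OF m])
  qed
  finally show ?thesis .
qed

lemma nn_integral_abs_average_diff_cond_exp_le:
  assumes sf: "sigma_finite_subalgebra M F" and g: "\<And>i. i < N \<Longrightarrow> g i \<in> borel_measurable M"
  shows "(\<integral>\<^sup>+ x. ennreal \<bar>(\<Sum>i<N. g i x) / real N - (\<Sum>i<N. real_cond_exp M F (g i) x) / real N\<bar> \<partial>M)
    \<le> 2 * (\<integral>\<^sup>+ x. (\<Sum>i<N. ennreal \<bar>g i x\<bar>) / of_nat N \<partial>M)"
proof -
  interpret sigma_finite_subalgebra M F by fact
  have "(\<integral>\<^sup>+ x. ennreal \<bar>(\<Sum>i<N. g i x) / real N - (\<Sum>i<N. real_cond_exp M F (g i) x) / real N\<bar> \<partial>M)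
      \<le> (\<integral>\<^sup>+ x. ennreal \<bar>(\<Sum>i<N. g i x) / real N\<bar> \<partial>M)
        + (\<integral>\<^sup>+ x. ennreal \<bar>(\<Sum>i<N. real_cond_exp M F (g i) x) / real N\<bar> \<partial>M)"
    using g by (intro nn_integral_abs_diff_le) auto
  also have "\<dots> \<le> (\<integral>\<^sup>+ x. (\<Sum>i<N. ennreal \<bar>g i x\<bar>) / of_nat N \<partial>M)
        + (\<integral>\<^sup>+ x. (\<Sum>i<N. ennreal \<bar>real_cond_exp M F (g i) x\<bar>) / of_nat N \<partial>M)"
    by (intro add_mono nn_integral_mono ennreal_abs_average_le)
  also have "\<dots> \<le> 2 * (\<integral>\<^sup>+ x. (\<Sum>i<N. ennreal \<bar>g i x\<bar>) / of_nat N \<partial>M)"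
    using nn_integral_average_abs_cond_exp_le[OF sf g] by (simp add: mult_2 add_left_mono)
  finally show ?thesis .
qed

lemma nn_integral_abs_average_cond_exp_diff_le:
  assumes sf: "sigma_finite_subalgebra M F" and g: "\<And>i. i < N \<Longrightarrow> g i \<in> borel_measurable M"
    and h: "h \<in> borel_measurable M"
  shows "(\<integral>\<^sup>+ x. ennreal \<bar>(\<Sum>i<N. real_cond_exp M F (g i) x) / real N - enn2real (h x)\<bar> \<partial>M)
    \<le> (\<integral>\<^sup>+ x. (\<Sum>i<N. ennreal \<bar>g i x\<bar>) / of_nat N \<partial>M) + (\<integral>\<^sup>+ x. h x \<partial>M)"
proof -
  interpret sigma_finite_subalgebra M F by fact
  have "(\<integral>\<^sup>+ x. ennreal \<bar>(\<Sum>i<N. real_cond_exp M F (g i) x) / real N - enn2real (h x)\<bar> \<partial>M)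
      \<le> (\<integral>\<^sup>+ x. ennreal \<bar>(\<Sum>i<N. real_cond_exp M F (g i) x) / real N\<bar> \<partial>M)
        + (\<integral>\<^sup>+ x. ennreal \<bar>enn2real (h x)\<bar> \<partial>M)"
    using h by (intro nn_integral_abs_diff_le) auto
  also have "\<dots> \<le> (\<integral>\<^sup>+ x. (\<Sum>i<N. ennreal \<bar>real_cond_exp M F (g i) x\<bar>) / of_nat N \<partial>M) + (\<integral>\<^sup>+ x. h x \<partial>M)"
    by (intro add_mono nn_integral_mono ennreal_abs_average_le) (simp add: ennreal_enn2real_le)
  also have "\<dots> \<le> (\<integral>\<^sup>+ x. (\<Sum>i<N. ennreal \<bar>g i x\<bar>) / of_nat N \<partial>M) + (\<integral>\<^sup>+ x. h x \<partial>M)"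
    using nn_integral_average_abs_cond_exp_le[OF sf g] by (rule add_right_mono)
  finally show ?thesis .
qed

lemma nn_integral_abs_enn2real_diff_le:
  assumes "subprob_space M" and h: "h \<in> borel_measurable M"
  shows "(\<integral>\<^sup>+ x. ennreal \<bar>enn2real (h x) - enn2real c\<bar> \<partial>M) \<le> (\<integral>\<^sup>+ x. h x \<partial>M) + c"
proof -
  interpret subprob_space M by fact
  have "(\<integral>\<^sup>+ x. ennreal \<bar>enn2real (h x) - enn2real c\<bar> \<partial>M) \<le> (\<integral>\<^sup>+ x. h x + c \<partial>M)"
    by (intro nn_integral_mono order.trans[OF ennreal_abs_diff_le] add_mono)
      (simp_all add: ennreal_enn2real_le)
  also have "\<dots> = (\<integral>\<^sup>+ x. h x \<partial>M) + c * emeasure M (space M)"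
    using h by (simp add: nn_integral_add)
  also have "\<dots> \<le> (\<integral>\<^sup>+ x. h x \<partial>M) + c"
    using mult_left_mono[OF emeasure_space_le_1, of c] by (intro add_left_mono) simp_all
  finally show ?thesis .
qed

section \<open>The proposal and acceptance kernels\<close>

lemma sets_ipf_prop1 [simp]: "sets (ipf_prop1 Ts r x) = sets borel"
  unfolding ipf_prop1_def by simp

lemma space_cloud_space_not_empty: "space (cloud_space N) \<noteq> {}"
  unfolding cloud_space_def by simp

lemma measurable_cloud_component [measurable]:
  "i < N \<Longrightarrow> (\<lambda>c. c i) \<in> measurable (cloud_space N) borel"
  unfolding cloud_space_def by simp

locale ipf_model =
  fixes pi0x :: "'x::euclidean_space measure"
    and T :: "nat \<Rightarrow> 'x \<Rightarrow> 'y::euclidean_space \<Rightarrow> 'x"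
    and \<rho> :: "'x \<Rightarrow> 'y \<Rightarrow> real"
    and \<beta> :: "'x \<Rightarrow> 'o::euclidean_space \<Rightarrow> real"
  assumes sets_pi0x: "sets pi0x = sets borel"
    and rho_nonneg: "0 \<le> \<rho> x y"
    and rho_integral: "(\<integral>\<^sup>+ y. ennreal (\<rho> x y) \<partial>lborel) = 1"
    and rho_measurable: "case_prod \<rho> \<in> borel_measurable borel"
    and beta_measurable: "case_prod \<beta> \<in> borel_measurable borel"
    and T_measurable: "case_prod (T s) \<in> borel_measurable borel"
begin

lemma prob_space_rho_density: "prob_space (density lborel (\<lambda>y. ennreal (\<rho> x y)))"
proof (rule prob_spaceI)
  have "\<rho> x \<in> borel_measurable borel" by (rule measurable_case_prod_fixed_fst[OF rho_measurable])
  then show "emeasure (density lborel (\<lambda>y. ennreal (\<rho> x y))) (space (density lborel (\<lambda>y. ennreal (\<rho> x y)))) = 1"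
    by (simp add: emeasure_density rho_integral)
qed

lemma measurable_T_graph: "(\<lambda>y. (T s x y, y)) \<in> measurable (density lborel f) borel"
proof -
  have "T s x \<in> borel_measurable borel" by (rule measurable_case_prod_fixed_fst[OF T_measurable])
  then have "(\<lambda>y. (T s x y, y)) \<in> measurable borel (borel \<Otimes>\<^sub>M borel)" by measurable
  then show ?thesis by (simp add: borel_prod measurable_cong_sets[OF sets_density])
qed

lemma measurable_T_graph_pair:
  "case_prod (\<lambda>x y. (T s x y, y)) \<in> measurable (borel \<Otimes>\<^sub>M density lborel f) borel"
proof -
  have [measurable]: "case_prod (T s) \<in> borel_measurable (borel \<Otimes>\<^sub>M borel)"
    using T_measurable by (simp add: borel_prod)
  have "case_prod (\<lambda>x y. (T s x y, y)) \<in> measurable (borel \<Otimes>\<^sub>M borel) (borel \<Otimes>\<^sub>M borel)"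
    by measurable
  moreover have "measurable (borel \<Otimes>\<^sub>M density lborel f) (borel :: ('x \<times> 'y) measure)
      = measurable (borel \<Otimes>\<^sub>M borel) (borel \<Otimes>\<^sub>M borel)"
    by (rule measurable_cong_sets) (rule sets_pair_measure_cong, simp, simp, metis borel_prod)
  ultimately show ?thesis by simp
qed

lemma prob_space_ipf_prop1: "prob_space (ipf_prop1 (T s) (\<rho> x') x)"
  unfolding ipf_prop1_def
  by (rule prob_space.prob_space_distr[OF prob_space_rho_density measurable_T_graph])

lemma measurable_ipf_prop1: "(\<lambda>x. ipf_prop1 (T s) (\<rho> x') x) \<in> measurable borel (subprob_algebra borel)"
proof -
  have "(\<lambda>_. density lborel (\<lambda>y. ennreal (\<rho> x' y)))
      \<in> measurable (borel :: 'x measure) (subprob_algebra (density lborel (\<lambda>y. ennreal (\<rho> x' y))))"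
    using prob_space_rho_density
    by (intro measurable_const) (auto simp: space_subprob_algebra prob_space_imp_subprob_space)
  then show ?thesis
    unfolding ipf_prop1_def by (rule measurable_distr2[OF measurable_T_graph_pair])
qed

lemma nn_integral_ipf_prop1:
  assumes psi: "\<psi> \<in> borel_measurable borel" "\<And>z. 0 \<le> \<psi> z"
  shows "(\<integral>\<^sup>+ z. ennreal (\<psi> z) \<partial>ipf_prop1 (T s) (\<rho> x') x) = (\<integral>\<^sup>+ y. ennreal (\<psi> (T s x y, y) * \<rho> x' y) \<partial>lborel)"
proof -
  have graph: "(\<lambda>y. (T s x y, y)) \<in> measurable lborel borel"
    using measurable_T_graph[of s x "\<lambda>_. 1"] by simp
  have e: "(\<lambda>z. ennreal (\<psi> z)) \<in> borel_measurable borel" using psi(1) by measurable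
  have "(\<integral>\<^sup>+ z. ennreal (\<psi> z) \<partial>ipf_prop1 (T s) (\<rho> x') x)
      = (\<integral>\<^sup>+ y. ennreal (\<psi> (T s x y, y)) \<partial>density lborel (\<lambda>y. ennreal (\<rho> x' y)))"
    unfolding ipf_prop1_def by (rule nn_integral_distr[OF measurable_T_graph]) (use e in simp)
  also have "\<dots> = (\<integral>\<^sup>+ y. ennreal (\<rho> x' y) * ennreal (\<psi> (T s x y, y)) \<partial>lborel)"
  proof (rule nn_integral_density)
    show "(\<lambda>y. ennreal (\<rho> x' y)) \<in> borel_measurable lborel"
      using measurable_case_prod_fixed_fst[OF rho_measurable] by measurable
    show "(\<lambda>y. ennreal (\<psi> (T s x y, y))) \<in> borel_measurable lborel"
      using measurable_compose[OF graph e] by simp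
  qed
  also have "\<dots> = (\<integral>\<^sup>+ y. ennreal (\<psi> (T s x y, y) * \<rho> x' y) \<partial>lborel)"
    by (intro nn_integral_cong) (simp only: mult.commute[of "\<psi> _" "\<rho> _ _"] ennreal_mult[OF rho_nonneg psi(2)])
  finally show ?thesis .
qed

lemma delta_T_rho_eq_nn_integral:
  assumes "\<psi> \<in> borel_measurable borel" "\<And>z. 0 \<le> \<psi> z"
  shows "delta_T_rho T \<rho> xs s \<psi> z = (\<integral>\<^sup>+ w. ennreal (\<psi> w) \<partial>ipf_prop1 (T s) (\<rho> (xs s)) (fst z))"
  unfolding delta_T_rho_def using assms by (simp add: nn_integral_ipf_prop1)

lemma borel_measurable_delta_T_rho:
  assumes "\<psi> \<in> borel_measurable borel" "\<And>z. 0 \<le> \<psi> z"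
  shows "delta_T_rho T \<rho> xs s \<psi> \<in> borel_measurable borel"
proof -
  have "(\<lambda>w. ennreal (\<psi> w)) \<in> borel_measurable borel" using assms by measurable
  from measurable_compose[OF measurable_compose[OF measurable_fst_borel measurable_ipf_prop1]
      nn_integral_measurable_subprob_algebra[OF this]]
  show ?thesis by (simp add: delta_T_rho_eq_nn_integral[OF assms] cong: measurable_cong)
qed

lemma nn_integral_opt_pred:
  assumes mu: "sets \<mu> = sets borel" and psi: "\<psi> \<in> borel_measurable borel" "\<And>z. 0 \<le> \<psi> z"
  shows "(\<integral>\<^sup>+ z. ennreal (\<psi> z) \<partial>opt_pred T \<rho> xs s \<mu>) = (\<integral>\<^sup>+ z. delta_T_rho T \<rho> xs s \<psi> z \<partial>\<mu>)"
proof -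
  have "(\<lambda>w. ennreal (\<psi> w)) \<in> borel_measurable borel" using psi by measurable
  moreover have "(\<lambda>z. ipf_prop1 (T s) (\<rho> (xs s)) (fst z)) \<in> measurable \<mu> (subprob_algebra borel)"
    using measurable_compose[OF measurable_fst_borel measurable_ipf_prop1]
    by (simp add: measurable_cong_sets[OF mu refl])
  ultimately show ?thesis
    unfolding opt_pred_def by (simp add: nn_integral_bind delta_T_rho_eq_nn_integral[OF psi])
qed

lemma sets_opt_filter: "sets (opt_filter pi0x T \<rho> \<beta> xs as s) = sets borel"
proof (induction s)
  case 0
  have "sets (ipf_pi0 pi0x \<rho> xs) = sets ((borel :: 'x measure) \<Otimes>\<^sub>M (borel :: 'y measure))"
    unfolding ipf_pi0_def by (rule sets_pair_measure_cong) (simp_all add: sets_pi0x)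
  then show ?case by (metis opt_filter.simps(1) borel_prod)
next
  case (Suc s)
  have "space (opt_filter pi0x T \<rho> \<beta> xs as s) \<noteq> {}"
    using sets_eq_imp_space_eq[OF Suc.IH] by simp
  then show ?case unfolding opt_filter.simps opt_upd_def opt_pred_def sets_density
    by (rule sets_bind[rotated]) simp
qed



lemma sets_ipf_proposal [simp, measurable_cong]: "sets (ipf_proposal N T \<rho> xs s c) = sets (cloud_space N)"
  unfolding ipf_proposal_def cloud_space_def by (rule sets_PiM_cong) simp_all

lemma prob_space_ipf_proposal: "prob_space (ipf_proposal N T \<rho> xs s c)"
  unfolding ipf_proposal_def by (intro prob_space_PiM prob_space_ipf_prop1)

text \<open>The proposal batch is the image of \<open>N\<close> independent noise draws \<open>y\<^sup>i \<sim> \<rho>(\<cdot>|x\<^sub>s)\<close>;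
  this representation makes it measurable in the old cloud.\<close>

lemma ipf_proposal_eq_distr_noise:
  "ipf_proposal N T \<rho> xs s c = distr (PiM {..<N} (\<lambda>_. density lborel (\<lambda>y. ennreal (\<rho> (xs s) y))))
     (cloud_space N) (\<lambda>ys. \<lambda>i\<in>{..<N}. (T s (fst (c i)) (ys i), ys i))"
proof -
  define D where "D = density lborel (\<lambda>y. ennreal (\<rho> (xs s) y))"
  define G where "G = (\<lambda>ys. \<lambda>i\<in>{..<N}. (T s (fst (c i)) (ys i), ys i))"
  let ?M = "\<lambda>i. ipf_prop1 (T s) (\<rho> (xs s)) (fst (c i))"
  have PM: "product_sigma_finite ?M"
    unfolding product_sigma_finite_def by (auto intro: prob_space_imp_sigma_finite prob_space_ipf_prop1)
  have PD: "product_sigma_finite (\<lambda>_::nat. D)"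
    unfolding product_sigma_finite_def D_def by (auto intro: prob_space_imp_sigma_finite prob_space_rho_density)
  have graph: "(\<lambda>y. (T s x y, y)) \<in> measurable D borel" for x
    unfolding D_def by (rule measurable_T_graph)
  have G: "G \<in> measurable (PiM {..<N} (\<lambda>_. D)) (cloud_space N)"
    unfolding G_def cloud_space_def
  proof (rule measurable_restrict)
    fix i assume "i \<in> {..<N}"
    then show "(\<lambda>ys. (T s (fst (c i)) (ys i), ys i)) \<in> measurable (PiM {..<N} (\<lambda>_. D)) borel"
      using measurable_compose[OF measurable_component_singleton[of i "{..<N}" "\<lambda>_. D"] graph] by simp
  qed
  have "PiM {..<N} ?M = distr (PiM {..<N} (\<lambda>_. D)) (cloud_space N) G"
  proof (rule product_sigma_finite.PiM_eqI[OF PM, symmetric])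
    show "sets (distr (PiM {..<N} (\<lambda>_. D)) (cloud_space N) G) = sets (PiM {..<N} ?M)"
      unfolding cloud_space_def sets_distr by (rule sets_PiM_cong) simp_all
    fix A assume A: "\<And>i. i \<in> {..<N} \<Longrightarrow> A i \<in> sets (?M i)"
    define B where "B i = (\<lambda>y. (T s (fst (c i)) y, y)) -` A i" for i
    have AC: "Pi\<^sub>E {..<N} A \<in> sets (cloud_space N)"
      unfolding cloud_space_def using A by (intro sets_PiM_I_finite) auto
    have B: "B i \<in> sets D" if "i < N" for i
    proof -
      have "A i \<in> sets borel" using A[of i] that by simp
      from measurable_sets[OF graph this] show ?thesis by (simp add: B_def D_def)
    qed
    have pre: "G -` Pi\<^sub>E {..<N} A \<inter> space (PiM {..<N} (\<lambda>_. D)) = Pi\<^sub>E {..<N} B"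
      unfolding G_def B_def by (auto simp: space_PiM D_def PiE_def Pi_def extensional_def)
    have "emeasure (distr (PiM {..<N} (\<lambda>_. D)) (cloud_space N) G) (Pi\<^sub>E {..<N} A)
        = (\<Prod>i<N. emeasure D (B i))"
      using B by (simp add: emeasure_distr[OF G AC] pre) (subst product_sigma_finite.emeasure_PiM[OF PD], auto)
    also have "\<dots> = (\<Prod>i<N. emeasure (?M i) (A i))"
    proof (rule prod.cong)
      fix i assume i: "i \<in> {..<N}"
      show "emeasure D (B i) = emeasure (?M i) (A i)"
        unfolding ipf_prop1_def D_def[symmetric] using A[OF i]
        by (subst emeasure_distr[OF graph]) (auto simp: B_def D_def)
    qed simp
    finally show "emeasure (distr (PiM {..<N} (\<lambda>_. D)) (cloud_space N) G) (Pi\<^sub>E {..<N} A)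
        = (\<Prod>i<N. emeasure (?M i) (A i))" .
  qed simp
  then show ?thesis unfolding ipf_proposal_def D_def G_def .
qed

lemma measurable_ipf_proposal:
  "(\<lambda>c. ipf_proposal N T \<rho> xs s c) \<in> measurable (cloud_space N) (subprob_algebra (cloud_space N))"
proof -
  define D where "D = density lborel (\<lambda>y. ennreal (\<rho> (xs s) y))"
  define Y where "Y = PiM {..<N} (\<lambda>_::nat. D)"
  define G :: "('x, 'y) cloud \<Rightarrow> (nat \<Rightarrow> 'y) \<Rightarrow> ('x, 'y) cloud"
    where "G = (\<lambda>c ys. \<lambda>i\<in>{..<N}. (T s (fst (c i)) (ys i), ys i))"
  have Y: "(\<lambda>_. Y) \<in> measurable (cloud_space N) (subprob_algebra Y)"
    using prob_space_PiM[OF prob_space_rho_density, of "{..<N}" "\<lambda>_. xs s"]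
    by (intro measurable_const) (auto simp: space_subprob_algebra prob_space_imp_subprob_space Y_def D_def)
  have "case_prod G \<in> measurable (cloud_space N \<Otimes>\<^sub>M Y) (cloud_space N)"
    unfolding G_def split_beta' cloud_space_def[of N]
  proof (rule measurable_restrict)
    fix i assume i: "i \<in> {..<N}"
    have "(\<lambda>c::('x, 'y) cloud. fst (c i)) \<in> borel_measurable (PiM {..<N} (\<lambda>_. borel))"
      using measurable_compose[OF measurable_component_singleton[of i "{..<N}" "\<lambda>_. borel"]
          measurable_fst_borel] i by simp
    then have "(\<lambda>p :: ('x, 'y) cloud \<times> (nat \<Rightarrow> 'y). (fst (fst p i), snd p i)) \<in> measurable (PiM {..<N} (\<lambda>_. borel) \<Otimes>\<^sub>M Y) (borel \<Otimes>\<^sub>M D)"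
      using i unfolding Y_def
      by (intro measurable_Pair measurable_compose[OF measurable_fst] measurable_compose[OF measurable_snd])
        simp_all
    from measurable_compose[OF this measurable_T_graph_pair[of s "\<lambda>y. ennreal (\<rho> (xs s) y)", folded D_def]]
    show "(\<lambda>p :: ('x, 'y) cloud \<times> (nat \<Rightarrow> 'y). (T s (fst (fst p i)) (snd p i), snd p i))
      \<in> borel_measurable (PiM {..<N} (\<lambda>_. borel) \<Otimes>\<^sub>M Y)"
      by simp
  qed
  from measurable_distr2[OF this Y] show ?thesis
    unfolding ipf_proposal_eq_distr_noise G_def Y_def D_def by simp
qed

lemma nn_integral_ipf_proposal_component:
  assumes psi: "\<psi> \<in> borel_measurable borel" "\<And>z. 0 \<le> \<psi> z" and i: "i < N"
  shows "(\<integral>\<^sup>+ c'. ennreal (\<psi> (c' i)) \<partial>ipf_proposal N T \<rho> xs s c) = delta_T_rho T \<rho> xs s \<psi> (c i)"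
proof -
  let ?M = "\<lambda>j. ipf_prop1 (T s) (\<rho> (xs s)) (fst (c j))"
  have e: "(\<lambda>w. ennreal (\<psi> w)) \<in> borel_measurable (?M i)"
    using psi(1) by (simp add: measurable_cong_sets[OF sets_ipf_prop1 refl])
  have m: "(\<lambda>\<omega>. \<omega> i) \<in> measurable (PiM {..<N} ?M) (?M i)"
    using i by (intro measurable_component_singleton) simp
  have "(\<integral>\<^sup>+ c'. ennreal (\<psi> (c' i)) \<partial>PiM {..<N} ?M)
      = (\<integral>\<^sup>+ w. ennreal (\<psi> w) \<partial>distr (PiM {..<N} ?M) (?M i) (\<lambda>\<omega>. \<omega> i))"
    by (rule nn_integral_distr[OF m, symmetric]) (use e in simp)
  also have "distr (PiM {..<N} ?M) (?M i) (\<lambda>\<omega>. \<omega> i) = ?M i"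
    using i by (intro distr_PiM_component prob_space_ipf_prop1) auto
  finally show ?thesis unfolding ipf_proposal_def delta_T_rho_eq_nn_integral[OF psi] .
qed

lemma nn_integral_ipf_proposal_average:
  assumes psi: "\<psi> \<in> borel_measurable borel" "\<And>z. 0 \<le> \<psi> z"
  shows "(\<integral>\<^sup>+ c'. (\<Sum>i<N. ennreal (\<psi> (c' i))) / of_nat N \<partial>ipf_proposal N T \<rho> xs s c)
    = (\<Sum>i<N. delta_T_rho T \<rho> xs s \<psi> (c i)) / of_nat N"
proof -
  have m: "\<And>i. i \<in> {..<N} \<Longrightarrow> (\<lambda>c'. ennreal (\<psi> (c' i))) \<in> borel_measurable (ipf_proposal N T \<rho> xs s c)"
    using psi(1) by measurable
  show ?thesis
    using nn_integral_ipf_proposal_component[OF psi]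
    by (simp only: nn_integral_divide[OF borel_measurable_sum[OF m]] nn_integral_sum[OF m]) simp
qed

lemma sets_ipf_accept_set: "(ipf_accept_set N \<beta> a g :: ('x, 'y) cloud set) \<in> sets (cloud_space N)"
proof -
  have beta: "(\<lambda>x. \<beta> x a) \<in> borel_measurable borel"
    by (rule measurable_case_prod_fixed_snd[OF beta_measurable])
  have "(\<lambda>c::('x, 'y) cloud. \<beta> (fst (c i)) a) \<in> borel_measurable (cloud_space N)" if "i < N" for i
    using measurable_compose[OF measurable_compose[OF measurable_cloud_component[OF that] measurable_fst_borel] beta]
    by simp
  then have "(\<lambda>c::('x, 'y) cloud. (\<Sum>i<N. \<beta> (fst (c i)) a) / real N) \<in> borel_measurable (cloud_space N)"
    by (intro borel_measurable_divide borel_measurable_sum) auto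
  then show ?thesis unfolding ipf_accept_set_def by measurable
qed

lemma measurable_ipf_accepted:
  "(\<lambda>c. ipf_accepted N T \<rho> \<beta> xs as \<gamma> s c) \<in> measurable (cloud_space N) (subprob_algebra (cloud_space N))"
  unfolding ipf_accepted_def
  by (rule measurable_uniform_measure_kernel[OF measurable_ipf_proposal sets_ipf_accept_set])

section \<open>The joint law of consecutive clouds\<close>

lemma sets_ipf_law [measurable_cong]: "sets (ipf_law pi0x N T \<rho> \<beta> xs as \<gamma> s) = sets (cloud_space N)"
proof (induction s)
  case 0
  have "sets (ipf_pi0 pi0x \<rho> xs) = sets (borel :: ('x \<times> 'y) measure)"
    using sets_opt_filter[of xs as 0] by simp
  then show ?case unfolding ipf_law.simps cloud_space_def by (rule sets_PiM_cong[OF refl])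
next
  case (Suc s)
  have "space (ipf_law pi0x N T \<rho> \<beta> xs as \<gamma> s) \<noteq> {}"
    using sets_eq_imp_space_eq[OF Suc.IH] space_cloud_space_not_empty by simp
  moreover have "sets (ipf_resample N \<beta> (as (Suc s)) c') = sets (cloud_space N)" for c'
    unfolding ipf_resample_def cloud_space_def by (rule sets_PiM_cong) simp_all
  moreover have "space (ipf_accepted N T \<rho> \<beta> xs as \<gamma> (Suc s) c) \<noteq> {}" for c
    unfolding ipf_accepted_def using space_cloud_space_not_empty sets_eq_imp_space_eq[OF sets_ipf_proposal] by simp
  ultimately show ?case unfolding ipf_law.simps by (intro sets_bind) blast+
qed

lemma sets_ipf_joint [measurable_cong]:
  "sets (ipf_joint pi0x N T \<rho> \<beta> xs as \<gamma> k) = sets (cloud_space N \<Otimes>\<^sub>M cloud_space N)"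
proof -
  have "space (ipf_law pi0x N T \<rho> \<beta> xs as \<gamma> (k - 1)) \<noteq> {}"
    using sets_eq_imp_space_eq[OF sets_ipf_law] space_cloud_space_not_empty by simp
  then show ?thesis unfolding ipf_joint_def by (rule sets_bind[rotated]) simp
qed

lemma measurable_ipf_joint_kernel:
  "(\<lambda>c. distr (ipf_accepted N T \<rho> \<beta> xs as \<gamma> k c) (cloud_space N \<Otimes>\<^sub>M cloud_space N) (\<lambda>c'. (c, c')))
     \<in> measurable (ipf_law pi0x N T \<rho> \<beta> xs as \<gamma> (k - 1)) (subprob_algebra (cloud_space N \<Otimes>\<^sub>M cloud_space N))"
  by (simp add: measurable_cong_sets[OF sets_ipf_law refl] measurable_distr2[OF _ measurable_ipf_accepted])

lemma nn_integral_ipf_joint: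
  assumes g: "g \<in> borel_measurable (cloud_space N \<Otimes>\<^sub>M cloud_space N)"
  shows "(\<integral>\<^sup>+ \<omega>. g \<omega> \<partial>ipf_joint pi0x N T \<rho> \<beta> xs as \<gamma> k)
    = (\<integral>\<^sup>+ c. (\<integral>\<^sup>+ c'. g (c, c') \<partial>ipf_accepted N T \<rho> \<beta> xs as \<gamma> k c) \<partial>ipf_law pi0x N T \<rho> \<beta> xs as \<gamma> (k - 1))"
  unfolding ipf_joint_def nn_integral_bind[OF g measurable_ipf_joint_kernel]
proof (rule nn_integral_cong)
  fix c assume "c \<in> space (ipf_law pi0x N T \<rho> \<beta> xs as \<gamma> (k - 1))"
  then have "c \<in> space (cloud_space N)" using sets_eq_imp_space_eq[OF sets_ipf_law] by simp
  then have "(\<lambda>c'. (c, c')) \<in> measurable (ipf_accepted N T \<rho> \<beta> xs as \<gamma> k c) (cloud_space N \<Otimes>\<^sub>M cloud_space N)"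
    by (simp add: ipf_accepted_def measurable_cong_sets[OF sets_uniform_measure refl]
        measurable_cong_sets[OF sets_ipf_proposal refl])
  then show "(\<integral>\<^sup>+ \<omega>. g \<omega> \<partial>distr (ipf_accepted N T \<rho> \<beta> xs as \<gamma> k c) (cloud_space N \<Otimes>\<^sub>M cloud_space N) (\<lambda>c'. (c, c')))
      = (\<integral>\<^sup>+ c'. g (c, c') \<partial>ipf_accepted N T \<rho> \<beta> xs as \<gamma> k c)"
    using g by (intro nn_integral_distr) simp_all
qed

lemma nn_integral_ipf_joint_fst_le:
  assumes h: "h \<in> borel_measurable (cloud_space N)"
  shows "(\<integral>\<^sup>+ \<omega>. h (fst \<omega>) \<partial>ipf_joint pi0x N T \<rho> \<beta> xs as \<gamma> k) \<le> (\<integral>\<^sup>+ c. h c \<partial>ipf_law pi0x N T \<rho> \<beta> xs as \<gamma> (k - 1))"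
  unfolding nn_integral_ipf_joint[OF measurable_compose[OF measurable_fst h]]
proof (intro nn_integral_mono)
  fix c
  interpret subprob_space "ipf_accepted N T \<rho> \<beta> xs as \<gamma> k c"
    unfolding ipf_accepted_def
    by (intro subprob_space_uniform_measure prob_space_imp_subprob_space prob_space_ipf_proposal)
      (simp add: sets_ipf_accept_set)
  show "(\<integral>\<^sup>+ c'. h (fst (c, c')) \<partial>ipf_accepted N T \<rho> \<beta> xs as \<gamma> k c) \<le> h c"
    using mult_left_mono[OF emeasure_space_le_1, of "h c"] by simp
qed

lemma sigma_finite_subalgebra_ipf_F:
  assumes "subprob_space (ipf_law pi0x N T \<rho> \<beta> xs as \<gamma> (k - 1))"
  shows "sigma_finite_subalgebra (ipf_joint pi0x N T \<rho> \<beta> xs as \<gamma> k) (ipf_F N (ipf_joint pi0x N T \<rho> \<beta> xs as \<gamma> k))"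
proof -
  let ?J = "ipf_joint pi0x N T \<rho> \<beta> xs as \<gamma> k"
  have "finite_measure ?J"
    using subprob_space_bind[OF assms measurable_ipf_joint_kernel]
    by (simp add: ipf_joint_def subprob_space_def)
  moreover have fst: "fst \<in> measurable ?J (cloud_space N)" by measurable
  then have "subalgebra ?J (ipf_F N ?J)"
    unfolding subalgebra_def ipf_F_def using measurable_sets[OF fst] measurable_space[OF fst]
    by (subst sets_vimage_algebra2) auto
  ultimately show ?thesis
    by (intro finite_measure_subalgebra_is_sigma_finite)
      (simp add: finite_measure_subalgebra_def finite_measure_subalgebra_axioms_def)
qed

lemma nn_integral_ipf_joint_average_le:
  assumes psi: "\<psi> \<in> borel_measurable borel" "\<And>z. 0 \<le> \<psi> z" and eps: "\<epsilon> < 1"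
    and fail: "AE c in ipf_law pi0x N T \<rho> \<beta> xs as \<gamma> (k - 1). measure (ipf_proposal N T \<rho> xs k c)
                 (space (cloud_space N) - ipf_accept_set N \<beta> (as k) (\<gamma> k)) \<le> \<epsilon>"
  shows "(\<integral>\<^sup>+ \<omega>. (\<Sum>i<N. ennreal (\<psi> (snd \<omega> i))) / of_nat N \<partial>ipf_joint pi0x N T \<rho> \<beta> xs as \<gamma> k)
    \<le> ennreal (1 / (1 - \<epsilon>))
       * (\<integral>\<^sup>+ c. (\<Sum>i<N. delta_T_rho T \<rho> xs k \<psi> (c i)) / of_nat N \<partial>ipf_law pi0x N T \<rho> \<beta> xs as \<gamma> (k - 1))"
proof -
  let ?L = "ipf_law pi0x N T \<rho> \<beta> xs as \<gamma> (k - 1)"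
  let ?P = "\<lambda>c. ipf_proposal N T \<rho> xs k c"
  let ?avg = "\<lambda>c'::('x, 'y) cloud. (\<Sum>i<N. ennreal (\<psi> (c' i))) / of_nat N"
  have avg [measurable]: "?avg \<in> borel_measurable (cloud_space N)"
    using psi(1) by (intro borel_measurable_divide_ennreal borel_measurable_sum) auto
  have "(\<integral>\<^sup>+ \<omega>. ?avg (snd \<omega>) \<partial>ipf_joint pi0x N T \<rho> \<beta> xs as \<gamma> k)
      = (\<integral>\<^sup>+ c. (\<integral>\<^sup>+ c'. ?avg c' \<partial>uniform_measure (?P c) (ipf_accept_set N \<beta> (as k) (\<gamma> k))) \<partial>?L)"
    using nn_integral_ipf_joint[OF measurable_compose[OF measurable_snd avg]]
    by (simp only: ipf_accepted_def snd_conv)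
  also have "\<dots> \<le> (\<integral>\<^sup>+ c. ennreal (1 / (1 - \<epsilon>)) * (\<integral>\<^sup>+ c'. ?avg c' \<partial>?P c) \<partial>?L)"
    using fail
  proof (intro nn_integral_mono_AE, elim eventually_mono)
    fix c assume "measure (?P c) (space (cloud_space N) - ipf_accept_set N \<beta> (as k) (\<gamma> k)) \<le> \<epsilon>"
    then show "(\<integral>\<^sup>+ c'. ?avg c' \<partial>uniform_measure (?P c) (ipf_accept_set N \<beta> (as k) (\<gamma> k)))
        \<le> ennreal (1 / (1 - \<epsilon>)) * (\<integral>\<^sup>+ c'. ?avg c' \<partial>?P c)"
      by (intro nn_integral_uniform_measure_le eps prob_space_ipf_proposal)
        (simp_all add: sets_ipf_accept_set sets_eq_imp_space_eq[OF sets_ipf_proposal])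
  qed
  also have "\<dots> = ennreal (1 / (1 - \<epsilon>)) * (\<integral>\<^sup>+ c. (\<Sum>i<N. delta_T_rho T \<rho> xs k \<psi> (c i)) / of_nat N \<partial>?L)"
  proof -
    have [measurable]: "delta_T_rho T \<rho> xs k \<psi> \<in> borel_measurable borel"
      by (rule borel_measurable_delta_T_rho[OF psi])
    show ?thesis
      by (simp only: nn_integral_ipf_proposal_average[OF psi]) (rule nn_integral_cmult, measurable)
  qed
  finally show ?thesis by simp
qed

end

theorem lemma7:
  fixes pi0x :: "'x::euclidean_space measure"
    and \<rho> :: "'x \<Rightarrow> 'y::euclidean_space \<Rightarrow> real"
    and \<beta> :: "'x \<Rightarrow> 'o::euclidean_space \<Rightarrow> real"
    and T :: "nat \<Rightarrow> 'x \<Rightarrow> 'y \<Rightarrow> 'x"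
    and xs :: "nat \<Rightarrow> 'x" and as :: "nat \<Rightarrow> 'o" and \<gamma> :: "nat \<Rightarrow> real"
    and N k :: nat
    and \<phi> :: "'x \<times> 'y \<Rightarrow> real"
    and M \<epsilon> :: real
  defines "J \<equiv> ipf_joint pi0x N T \<rho> \<beta> xs as \<gamma> k"
      and "L \<equiv> ipf_law pi0x N T \<rho> \<beta> xs as \<gamma> (k - 1)"
      and "F \<equiv> ipf_F N (ipf_joint pi0x N T \<rho> \<beta> xs as \<gamma> k)"
      and "nphi \<equiv> norm4_pow4 pi0x T \<rho> \<beta> xs as \<phi> (k - 1)"
      and "\<delta> \<equiv> delta_T_rho T \<rho> xs k (\<lambda>z. \<bar>\<phi> z\<bar> ^ 4)"
  assumes k: "1 \<le> k" and N: "1 \<le> N"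
    and pi0x: "prob_space pi0x" "sets pi0x = sets borel"
    and rho_dens: "\<forall>x. (\<forall>y. 0 \<le> \<rho> x y) \<and> (\<integral>\<^sup>+ y. ennreal (\<rho> x y) \<partial>lborel) = 1"
    and rho_meas: "case_prod \<rho> \<in> borel_measurable borel"
    and beta_dens: "\<forall>x. (\<forall>a. 0 \<le> \<beta> x a) \<and> (\<integral>\<^sup>+ a. ennreal (\<beta> x a) \<partial>lborel) = 1"
    and beta_meas: "case_prod \<beta> \<in> borel_measurable borel"
    and T_meas: "\<forall>s. case_prod (T s) \<in> borel_measurable borel"
    and gamma_pos: "\<forall>s. 0 < \<gamma> s"
    and well_defined: "prob_space L"
    and phi_meas: "\<phi> \<in> borel_measurable borel"
    and a_bounded: "bdd_above (range (\<lambda>y. \<bar>\<rho> (xs k) y\<bar>))"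
    and M_nonneg: "0 \<le> M"
    and b1: "(\<integral>\<^sup>+ c. (\<Sum>i<N. \<delta> (c i)) / of_nat N \<partial>L)
               \<le> ennreal M * ennreal (supnorm (\<rho> (xs k))) * nphi"
    and b2: "(\<integral>\<^sup>+ z. \<delta> z \<partial>opt_filter pi0x T \<rho> \<beta> xs as (k - 1))
               \<le> ennreal (supnorm (\<rho> (xs k))) * nphi"
    and eps: "\<epsilon> < 1"
    and c_fail: "AE c in L. measure (ipf_proposal N T \<rho> xs k c)
                     (space (cloud_space N) - ipf_accept_set N \<beta> (as k) (\<gamma> k)) \<le> \<epsilon>"
  shows
    "((\<integral>\<^sup>+ \<omega>. ennreal \<bar>(\<Sum>i<N. \<bar>\<phi> (snd \<omega> i)\<bar> ^ 4) / real N
          - (\<Sum>i<N. real_cond_exp J F (\<lambda>\<omega>'. \<bar>\<phi> (snd \<omega>' i)\<bar> ^ 4) \<omega>) / real N\<bar> \<partial>J)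
       \<le> ennreal (2 / (1 - \<epsilon>)) * ennreal M * ennreal (supnorm (\<rho> (xs k))) * nphi) \<and>
     ((\<integral>\<^sup>+ \<omega>. ennreal \<bar>(\<Sum>i<N. real_cond_exp J F (\<lambda>\<omega>'. \<bar>\<phi> (snd \<omega>' i)\<bar> ^ 4) \<omega>) / real N
          - enn2real ((\<Sum>i<N. \<delta> (fst \<omega> i)) / of_nat N)\<bar> \<partial>J)
       \<le> ennreal ((2 - \<epsilon>) / (1 - \<epsilon>)) * ennreal M * ennreal (supnorm (\<rho> (xs k))) * nphi) \<and>
     ((\<integral>\<^sup>+ c. ennreal \<bar>enn2real ((\<Sum>i<N. \<delta> (c i)) / of_nat N)
          - enn2real (\<integral>\<^sup>+ z. ennreal (\<bar>\<phi> z\<bar> ^ 4)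
               \<partial>opt_pred T \<rho> xs k (opt_filter pi0x T \<rho> \<beta> xs as (k - 1)))\<bar> \<partial>L)
       \<le> ennreal (supnorm (\<rho> (xs k))) * ennreal (M + 1) * nphi)"
proof -
  interpret ipf_model pi0x T \<rho> \<beta>
    using pi0x(2) rho_dens rho_meas beta_meas T_meas by unfold_locales auto
  interpret L: prob_space L by (rule well_defined)
  let ?s = "ennreal (supnorm (\<rho> (xs k)))"
  let ?B = "\<integral>\<^sup>+ c. (\<Sum>i<N. \<delta> (c i)) / of_nat N \<partial>L"
  let ?K = "\<integral>\<^sup>+ z. ennreal (\<bar>\<phi> z\<bar> ^ 4) \<partial>opt_pred T \<rho> xs k (opt_filter pi0x T \<rho> \<beta> xs as (k - 1))"
  have B: "?B \<le> ennreal M * ?s * nphi" by (rule b1)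
  have psi: "(\<lambda>z. \<bar>\<phi> z\<bar> ^ 4) \<in> borel_measurable borel" "\<And>z. 0 \<le> \<bar>\<phi> z\<bar> ^ 4"
    using phi_meas by auto
  have [measurable]: "\<delta> \<in> borel_measurable borel"
    unfolding \<delta>_def by (rule borel_measurable_delta_T_rho[OF psi])
  have sf: "sigma_finite_subalgebra J F"
    unfolding J_def F_def using well_defined
    by (intro sigma_finite_subalgebra_ipf_F) (simp add: L_def prob_space_imp_subprob_space)
  have g: "\<And>i. i < N \<Longrightarrow> (\<lambda>\<omega>. \<bar>\<phi> (snd \<omega> i)\<bar> ^ 4) \<in> borel_measurable J"
    and h: "(\<lambda>\<omega>. (\<Sum>i<N. \<delta> (fst \<omega> i)) / of_nat N) \<in> borel_measurable J"
    and avg_L: "(\<lambda>c. (\<Sum>i<N. \<delta> (c i)) / of_nat N) \<in> borel_measurable L"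
    unfolding J_def L_def using phi_meas by measurable
  have snd_le: "(\<integral>\<^sup>+ \<omega>. (\<Sum>i<N. ennreal \<bar>\<bar>\<phi> (snd \<omega> i)\<bar> ^ 4\<bar>) / of_nat N \<partial>J) \<le> ennreal (1 / (1 - \<epsilon>)) * ?B"
    using nn_integral_ipf_joint_average_le[OF psi eps c_fail[unfolded L_def]]
    unfolding J_def L_def \<delta>_def by simp
  have fst_le: "(\<integral>\<^sup>+ \<omega>. (\<Sum>i<N. \<delta> (fst \<omega> i)) / of_nat N \<partial>J) \<le> ?B"
    unfolding J_def L_def by (rule nn_integral_ipf_joint_fst_le) measurable
  have K: "?K \<le> ?s * nphi"
    using b2 unfolding nn_integral_opt_pred[OF sets_opt_filter psi] \<delta>_def .
  have noise_le: "2 * (ennreal (1 / (1 - \<epsilon>)) * ?B) \<le> ennreal (2 / (1 - \<epsilon>)) * ennreal M * ?s * nphi"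
    using mult_left_mono[OF B zero_le]
    by (simp add: ennreal_two_mult_inverse_one_minus[OF eps] mult.assoc[symmetric])
  have cond_le: "ennreal (1 / (1 - \<epsilon>)) * ?B + ?B \<le> ennreal ((2 - \<epsilon>) / (1 - \<epsilon>)) * ennreal M * ?s * nphi"
    using add_mono[OF mult_left_mono[OF B zero_le] B]
    by (simp add: ennreal_inverse_one_minus_plus_one[OF eps, symmetric] distrib_right mult.assoc)
  have pred_le: "?B + ?K \<le> ?s * ennreal (M + 1) * nphi"
    using add_mono[OF B K] M_nonneg by (simp add: ennreal_plus distrib_left distrib_right ac_simps)
  show ?thesis
    using order.trans[OF nn_integral_abs_average_diff_cond_exp_le[where g = "\<lambda>i \<omega>. \<bar>\<phi> (snd \<omega> i)\<bar> ^ 4", OF sf g]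
          order.trans[OF mult_left_mono[OF snd_le zero_le] noise_le]]
      order.trans[OF nn_integral_abs_average_cond_exp_diff_le[where g = "\<lambda>i \<omega>. \<bar>\<phi> (snd \<omega> i)\<bar> ^ 4", OF sf g h]
          order.trans[OF add_mono[OF snd_le fst_le] cond_le]]
      order.trans[OF nn_integral_abs_enn2real_diff_le[OF L.subprob_space_axioms avg_L] pred_le]
    by blast
qed

end
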